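(* Let $n\ge1$. Let $\lambda_i^{(n+1)}$, for $0\le i\le\binom{n+1}{2}$, be the unique integers with $$[n+1]!=\sum_{s=1}^n\left[n\atop s\right][2]^s+\lambda_0^{(n+1)}+\sum_{l=1}^{\binom{n+1}{2}}\lambda_l^{(n+1)}(q^l+q^{-l}).$$ For $i\ge0$, let $\mu_i^{(n+1)}$ be the coefficient of $q^i$ in $[n+1]!$; this is $0$ for $i>\binom{n+1}{2}$. Then: (a) For $0\le i\le n$, $$\mu_i^{(n+1)}=\lambda_i^{(n+1)}+\sum_{\substack{i\le s\le n\\ s\equiv i \bmod 2}}\left[n\atop s\right]\binom{s}{\frac{s+i}{2}}.$$ For $n+1\le i\le\binom{n+1}{2}$, $\mu_i^{(n+1)}=\lambda_i^{(n+1)}$. (b) Let $I=\lfloor\frac{n+1}{2}\rfloor$. If $I$ is odd, then for every even $i$; and if $I$ is even, then for every odd $i$: $$\lambda_i^{(n+1)}=-\sum_{\substack{i\le s\le n\\ s\equiv i\bmod 2}}\left[n\atop s\right]\binom{s}{\frac{s+i}{2}}\quad\text{if }0\le i\le n,$$ and $\lambda_i^{(n+1)}=0$ if $n+1\le i\le\binom{n+1}{2}$. (c) For all $i\ge0$, $$\mu_i^{(n+2)}=\sum_{j=0}^{n+1}\mu^{(n+1)}_{|i-(n+1)+2j|}.$$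
   Context: For an integer $k\ge1$, the quantum integer is the Laurent polynomial $$[k]=\frac{q^k-q^{-k}}{q-q^{-1}}=q^{k-1}+q^{k-3}+\cdots+q^{1-k}\in\mathbb{Z}[q,q^{-1}],$$ and $[m]!=[m][m-1]\cdots[1]$. The unsigned Stirling number of the first kind $\left[n\atop s\right]$ is the number of permutations of $\{1,\dots,n\}$ having exactly $s$ cycles in their disjoint-cycle decomposition, fixed points included. *)

theory Defs
  imports "HOL-Combinatorics.Stirling" "HOL-Computational_Algebra.Formal_Laurent_Series"
begin

text \<open>Laurent polynomials in q with integer coefficients are modelled as formal Laurent
  series over int; q^j is fls_X_intpow j.\<close>

definition qint :: "nat \<Rightarrow> int fls" where
  "qint k = (\<Sum>j<k. fls_X_intpow (int k - 1 - 2 * int j))"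

definition qfact :: "nat \<Rightarrow> int fls" where
  "qfact m = (\<Prod>k\<in>{1..m}. qint k)"

definition mu :: "nat \<Rightarrow> nat \<Rightarrow> int" where
  "mu m i = fls_nth (qfact m) (int i)"

end

theory Submission imports Defs begin

text \<open>Multiplying by \<open>[k]\<close> replaces a coefficient sequence by the sum of \<open>k\<close> shifts of it, and
  \<open>[m+1]! = [m]! [m+1]\<close>. This gives the recursion (c) directly; combined with the symmetry
  \<open>q \<mapsto> q\<^sup>-\<^sup>1\<close> of \<open>[m]!\<close> and the fact that all its exponents are congruent to \<open>m(m-1)/2\<close> mod 2,
  it reduces (a) and (b) to reading off coefficients: \<open>[2]\<^sup>s = (q + q\<^sup>-\<^sup>1)\<^sup>s\<close> contributes
  \<open>s choose (s+i)/2\<close> to \<open>q\<^sup>i\<close> when \<open>s - i\<close> is even and nonnegative, and the coefficients of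
  the wrong parity vanish.\<close>

lemma fls_nth_mult_qint:
  "fls_nth (f * qint k) i = (\<Sum>j<k. fls_nth f (i - (int k - 1 - 2 * int j)))"
  unfolding qint_def sum_distrib_left fls_nth_sum
  by (simp add: fls_shifted_times_simps algebra_simps)

lemma qfact_Suc: "qfact (Suc m) = qfact m * qint (Suc m)"
  unfolding qfact_def by (simp add: prod.nat_ivl_Suc' mult.commute)

lemma fls_nth_qfact_Suc:
  "fls_nth (qfact (Suc m)) i = (\<Sum>j\<le>m. fls_nth (qfact m) (i - int m + 2 * int j))"
  unfolding qfact_Suc fls_nth_mult_qint lessThan_Suc_atMost[symmetric]
  by (simp add: algebra_simps)

lemma fls_nth_qfact_uminus: "fls_nth (qfact m) (- i) = fls_nth (qfact m) i"
proof (induction m arbitrary: i)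
  case 0
  then show ?case by (simp add: qfact_def)
next
  case (Suc m)
  have "fls_nth (qfact (Suc m)) (- i) = (\<Sum>j\<le>m. fls_nth (qfact m) (i + int m - 2 * int j))"
    unfolding fls_nth_qfact_Suc
    using Suc.IH[of "i + int m - 2 * int _"] by (simp add: algebra_simps)
  also have "\<dots> = (\<Sum>j\<le>m. fls_nth (qfact m) (i + int m - 2 * int (m - j)))"
    by (rule sum.reindex_bij_witness[where i="\<lambda>j. m - j" and j="\<lambda>j. m - j"]) auto
  also have "\<dots> = fls_nth (qfact (Suc m)) i"
    unfolding fls_nth_qfact_Suc by (intro sum.cong) (auto simp: algebra_simps of_nat_diff)
  finally show ?case .
qed

lemma fls_nth_qfact_abs: "fls_nth (qfact m) (int (nat \<bar>i\<bar>)) = fls_nth (qfact m) i"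
  using fls_nth_qfact_uminus[of m i] by (cases "i \<ge> 0") simp_all

lemma mu_Suc: "mu (Suc m) i = (\<Sum>j=0..m. mu m (nat \<bar>int i - int m + 2 * int j\<bar>))"
  unfolding mu_def fls_nth_qfact_Suc fls_nth_qfact_abs by (simp add: atLeast0AtMost)

lemma even_if_fls_nth_qfact_nonzero:
  "fls_nth (qfact m) i \<noteq> 0 \<Longrightarrow> even (i + int (m choose 2))"
proof (induction m arbitrary: i)
  case 0
  then show ?case by (simp add: qfact_def numeral_2_eq_2 split: if_splits)
next
  case (Suc m)
  then obtain j where "fls_nth (qfact m) (i - int m + 2 * int j) \<noteq> 0"
    unfolding fls_nth_qfact_Suc by (meson sum.neutral)
  from Suc.IH[OF this] show ?case
    by (simp add: numeral_2_eq_2) presburger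
qed

lemma mu_eq_0_if_odd: "odd (i + (m choose 2)) \<Longrightarrow> mu m i = 0"
  unfolding mu_def using even_if_fls_nth_qfact_nonzero[of m "int i"] by auto

lemma even_choose_two_iff: "even (m choose 2) \<longleftrightarrow> even (m div 2)"
proof (cases "even m")
  case True
  then obtain t where m: "m = 2 * t" ..
  then have "m choose 2 = t * (2 * t - 1)"
    by (simp add: choose_two)
  moreover have "even (t * (2 * t - 1)) \<longleftrightarrow> even t"
    by (cases t) (simp_all add: even_mult_iff)
  ultimately show ?thesis
    using m by (simp only:) simp
next
  case False
  then obtain t where m: "m = 2 * t + 1" using oddE by blast
  then have "m choose 2 = t * (2 * t + 1)"
    by (simp add: choose_two)
  then show ?thesis
    using m by (simp only:) (simp add: even_mult_iff)
qed

lemma qint_2: "qint 2 = fls_X_intpow 1 + fls_X_intpow (- 1)"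
  by (simp add: qint_def numeral_2_eq_2 lessThan_Suc)

lemma qint_2_power:
  "qint 2 ^ s = (\<Sum>k\<le>s. of_nat (s choose k) * fls_X_intpow (2 * int k - int s))"
  unfolding qint_2 binomial_ring
proof (intro sum.cong refl)
  fix k assume "k \<in> {..s}"
  then have "int k + - int (s - k) = 2 * int k - int s"
    by auto
  then have "(fls_X_intpow 1 :: int fls) ^ k * fls_X_intpow (- 1) ^ (s - k) =
      fls_X_intpow (2 * int k - int s)"
    unfolding fls_X_intpow_power fls_X_intpow_times_fls_X_intpow by simp
  then show "of_nat (s choose k) * fls_X_intpow 1 ^ k * fls_X_intpow (- 1) ^ (s - k) =
      (of_nat (s choose k) :: int fls) * fls_X_intpow (2 * int k - int s)"
    by (simp only: mult.assoc)
qed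

lemma fls_nth_qint_2_power:
  "fls_nth (qint 2 ^ s) (int i) =
     (if i \<le> s \<and> even (s - i) then int (s choose ((s + i) div 2)) else 0)"
proof -
  have exponent: "int i = 2 * int k - int s \<longleftrightarrow> i \<le> s \<and> even (s - i) \<and> k = (s + i) div 2"
    if "k \<le> s" for k
    using that by presburger
  have monomial: "fls_nth (of_nat c * fls_X_intpow e) (int i) = (if int i = e then int c else 0)"
    for c e
    by (simp add: fls_of_nat)
  have "fls_nth (qint 2 ^ s) (int i) =
      (\<Sum>k\<le>s. if i \<le> s \<and> even (s - i) \<and> k = (s + i) div 2 then int (s choose k) else 0)"
    unfolding qint_2_power fls_nth_sum monomial
    by (intro sum.cong refl) (simp add: exponent)
  also have "\<dots> = (if i \<le> s \<and> even (s - i) then int (s choose ((s + i) div 2)) else 0)"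
    by (cases "i \<le> s \<and> even (s - i)") (auto intro!: sum.neutral)
  finally show ?thesis .
qed

lemma fls_nth_sum_qint_2_power:
  assumes "finite A"
  shows "fls_nth (\<Sum>s\<in>A. of_nat (c s) * qint 2 ^ s) (int i) =
    (\<Sum>s\<in>{s\<in>A. i \<le> s \<and> even (s - i)}. int (c s) * int (s choose ((s + i) div 2)))"
  unfolding fls_nth_sum fls_of_nat fls_mult_const_nth fls_nth_qint_2_power
  using assms by (simp add: sum.inter_filter if_distrib cong: if_cong)

lemma fls_nth_sum_symmetric_monomials:
  fixes a :: "nat \<Rightarrow> 'a::comm_ring_1"
  shows
  "fls_nth (\<Sum>l=1..N. fls_const (a l) * (fls_X_intpow (int l) + fls_X_intpow (- int l))) (int i) =
     (if 1 \<le> i \<and> i \<le> N then a i else 0)"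
proof -
  have "fls_nth (\<Sum>l=1..N. fls_const (a l) * (fls_X_intpow (int l) + fls_X_intpow (- int l))) (int i)
      = (\<Sum>l=1..N. if l = i then a l else 0)"
    unfolding fls_nth_sum by (intro sum.cong refl) auto
  then show ?thesis by simp
qed

theorem proposition4:
  fixes n :: nat and lam :: "nat \<Rightarrow> int"
  assumes n: "n \<ge> 1"
    and lam: "qfact (n + 1) =
        (\<Sum>s=1..n. of_nat (stirling n s) * qint 2 ^ s)
        + fls_const (lam 0)
        + (\<Sum>l=1..(n + 1) choose 2.
             fls_const (lam l) * (fls_X_intpow (int l) + fls_X_intpow (- int l)))"
  shows
    "(\<forall>i\<le>n. mu (n + 1) i = lam i +
        (\<Sum>s\<in>{s. i \<le> s \<and> s \<le> n \<and> even (s - i)}.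
            int (stirling n s) * int (s choose ((s + i) div 2))))
   \<and> (\<forall>i. n + 1 \<le> i \<and> i \<le> (n + 1) choose 2 \<longrightarrow> mu (n + 1) i = lam i)
   \<and> (\<forall>i\<le>(n + 1) choose 2.
        ((odd ((n + 1) div 2) \<and> even i) \<or> (even ((n + 1) div 2) \<and> odd i)) \<longrightarrow>
        (i \<le> n \<longrightarrow> lam i = - (\<Sum>s\<in>{s. i \<le> s \<and> s \<le> n \<and> even (s - i)}.
            int (stirling n s) * int (s choose ((s + i) div 2))))
        \<and> (n + 1 \<le> i \<longrightarrow> lam i = 0))
   \<and> (\<forall>i. mu (n + 2) i =
        (\<Sum>j=0..n + 1. mu (n + 1) (nat \<bar>int i - int (n + 1) + 2 * int j\<bar>)))"
proof -
  define B where "B i = (\<Sum>s\<in>{s. i \<le> s \<and> s \<le> n \<and> even (s - i)}.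
    int (stirling n s) * int (s choose ((s + i) div 2)))" for i
  have "(\<Sum>s=1..n. of_nat (stirling n s) * qint 2 ^ s) =
      (\<Sum>s=0..n. of_nat (stirling n s) * qint 2 ^ s :: int fls)"
    using n by (simp add: sum.atLeast_Suc_atMost)
  moreover have "{s \<in> {0..n}. i \<le> s \<and> even (s - i)} = {s. i \<le> s \<and> s \<le> n \<and> even (s - i)}" for i
    by auto
  ultimately have stirling_part: "fls_nth (\<Sum>s=1..n. of_nat (stirling n s) * qint 2 ^ s) (int i) = B i"
    for i unfolding B_def by (simp add: fls_nth_sum_qint_2_power)
  have coeff: "mu (n + 1) i = lam i + B i" if "i \<le> (n + 1) choose 2" for i
    unfolding mu_def lam fls_plus_nth stirling_part fls_nth_sum_symmetric_monomials
    using that by (cases "i = 0") auto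
  have "n \<le> (n + 1) choose 2"
    by (simp add: numeral_2_eq_2)
  then have part_a: "\<forall>i\<le>n. mu (n + 1) i = lam i + B i"
    using coeff by auto
  have "B i = 0" if "n < i" for i
    unfolding B_def using that by (auto intro!: sum.neutral)
  then have part_a': "\<forall>i. n + 1 \<le> i \<and> i \<le> (n + 1) choose 2 \<longrightarrow> mu (n + 1) i = lam i"
    using coeff by auto
  have "mu (n + 1) i = 0"
    if "(odd ((n + 1) div 2) \<and> even i) \<or> (even ((n + 1) div 2) \<and> odd i)" for i
    using that by (intro mu_eq_0_if_odd) (auto simp: even_choose_two_iff)
  with part_a part_a' have part_b: "\<forall>i\<le>(n + 1) choose 2.
      ((odd ((n + 1) div 2) \<and> even i) \<or> (even ((n + 1) div 2) \<and> odd i)) \<longrightarrow>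
      (i \<le> n \<longrightarrow> lam i = - B i) \<and> (n + 1 \<le> i \<longrightarrow> lam i = 0)"
    by fastforce
  have "n + 2 = Suc (n + 1)"
    by simp
  then have part_c: "\<forall>i. mu (n + 2) i =
      (\<Sum>j=0..n + 1. mu (n + 1) (nat \<bar>int i - int (n + 1) + 2 * int j\<bar>))"
    by (simp only: mu_Suc) simp
  show ?thesis
    unfolding B_def[symmetric] using part_a part_a' part_b part_c by blast
qed

end
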